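(* Let $F_0$ be a cdf and $\mathbb{F}$ a set of measurable functions $\mathbb{R}_+\to\mathbb{R}$ such that conditions (C1), (C2), (C3), (C4) hold, with $\mathbb{P}^*$ and $\ell^*$ as in (C3)–(C4), and assume moreover that $F_0^{-1}\circ F_{\ell^*}^{\mathbb{P}^*}\in\mathbb{F}$. Then the $\mathbb{F}$-robust cost-efficiency problem for $F_0$ has a $\mathbb{P}^*$-a.s. unique solution, given by $$X^*=F_0^{-1}\big(F_{\ell^*}^{\mathbb{P}^*}(\ell^* )\big).$$
   Context: Standing setting: fix $T>0$, $r\in\mathbb{R}$, $S_0>0$, and write $\mathbb{R}_+=[0,\infty)$. Let $S_T:\Omega\to\mathbb{R}_+$ be a random variable and $\mathcal{F}=\sigma(S_T)$. $\mathcal{P}$ is a set of mutually equivalent probability measures on $(\Omega,\mathcal{F})$, and $\mathbb{Q}$ is a probability measure on $(\Omega,\mathcal{F})$ equivalent to every $\mathbb{P}\in\mathcal{P}$. The set of payoffs is $\mathcal{X}=\{g(S_T): g:\mathbb{R}_+\to\mathbb{R}_+\text{ measurable}, E_{\mathbb{Q}}[|g(S_T)|]<\infty\}$, and the price of $X\in\mathcal{X}$ is $e^{-rT}E_{\mathbb{Q}}[X]$. For $\mathbb{P}\in\mathcal{P}$ let $\ell^{\mathbb{P}}=d\mathbb{P}/d\mathbb{Q}$. $F_X^{\mathbb{P}}$ denotes the cdf of $X$ under $\mathbb{P}$; for a cdf $F$, $F^{-1}(p)=\inf\{x:F(x)\ge p\}$. Integral stochastic ordering: for a set $\mathbb{F}$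 of measurable functions $\mathbb{R}_+\to\mathbb{R}$ and cdfs $F,G$ supported on $\mathbb{R}_+$, $F\preceq_{\mathbb{F}}G$ means $\int f\,dF\le\int f\,dG$ for all $f\in\mathbb{F}$ for which the integrals are finite. Robust cost-efficiency problem: $\inf\{e^{-rT}E_{\mathbb{Q}}[X]: X\in\mathcal{B}^{\mathbb{F}}_{F_0}\}$ where $\mathcal{B}^{\mathbb{F}}_{F_0}=\{X\in\mathcal{X}: F_0\preceq_{\mathbb{F}}F_X^{\mathbb{P}}\text{ for all }\mathbb{P}\in\mathcal{P}\}$. Standard cost-efficiency: for $\mathbb{P}\in\mathcal{P}$, the standard problem for $F_0$ is $\inf\{e^{-rT}E_{\mathbb{Q}}[X]:X\in\mathcal{X},F_X^{\mathbb{P}}=F_0\}$; $X$ is $\mathbb{P}$-cost-efficient if it solves this problem for $F_0=F_X^{\mathbb{P}}$. $\mathbb{F}$ is composition-consistent if $f,g\in\mathbb{F}\Rightarrow f\circ g\in\mathbb{F}$. $\mathbb{F}$ is cost-consistent if for all $X,Y\in\mathcal{X}$ and $\mathbb{P}\in\mathcal{P}$ with $X,Y$ both $\mathbb{P}$-cost-efficient, $F_X^{\mathbb{P}}\preceq_{\mathbb{F}}F_Y^{\mathbb{P}}$ implies $E_{\mathbb{Q}}[X]\le E_{\mathbb{Q}}[Y]$, with strict inequality if additionally $F_X^{\mathbb{P}}\neq F_Y^{\mathbb{P}}$. A measure $\mathbb{P}^*\in\mathcal{P}$ with $\ell^*=d\mathbb{P}^*/d\mathbb{Q}$ is least favorable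 w.r.t. $\mathbb{F}$ if $F_{\ell^*}^{\mathbb{P}^*}\preceq_{\mathbb{F}}F_{\ell^*}^{\mathbb{P}}$ for all $\mathbb{P}\in\mathcal{P}$. Conditions: (C1) $\int_0^1(F_0^{-1}(u))^2du<\infty$ and $F_0(x)=0$ for $x<0$. (C2) $\mathbb{F}$ is composition-consistent and cost-consistent. (C3) $\mathcal{P}$ contains a least favorable measure $\mathbb{P}^*$ w.r.t. $\mathbb{F}$. (C4) With $\ell^*=d\mathbb{P}^*/d\mathbb{Q}$, the map $x\mapsto F^{\mathbb{P}^*}_{\ell^*}(x)$ is continuous and $1/\ell^*$ has finite variance under $\mathbb{P}^*$. *)

theory Defs
  imports "HOL-Probability.Probability"
begin

definition is_cdf :: "(real \<Rightarrow> real) \<Rightarrow> bool" where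
  "is_cdf F \<longleftrightarrow> mono F \<and> (\<forall>x. continuous (at_right x) F)
      \<and> (F \<longlongrightarrow> 0) at_bot \<and> (F \<longlongrightarrow> 1) at_top"

definition quantile :: "(real \<Rightarrow> real) \<Rightarrow> real \<Rightarrow> real" where
  "quantile F p = Inf {x. p \<le> F x}"

definition cdf_of :: "'a measure \<Rightarrow> ('a \<Rightarrow> real) \<Rightarrow> real \<Rightarrow> real" where
  "cdf_of P X = cdf (distr P borel X)"

definition stoch_le :: "(real \<Rightarrow> real) set \<Rightarrow> (real \<Rightarrow> real) \<Rightarrow> (real \<Rightarrow> real) \<Rightarrow> bool" where
  "stoch_le FF F G \<longleftrightarrow> (\<forall>f\<in>FF. integrable (interval_measure F) f \<and> integrable (interval_measure G) f
       \<longrightarrow> (\<integral>x. f x \<partial>interval_measure F) \<le> (\<integral>x. f x \<partial>interval_measure G))"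

definition lr :: "'a measure \<Rightarrow> 'a measure \<Rightarrow> 'a \<Rightarrow> real" where
  "lr Q P = (\<lambda>\<omega>. enn2real (RN_deriv Q P \<omega>))"

definition payoffs :: "'a measure \<Rightarrow> ('a \<Rightarrow> real) \<Rightarrow> ('a \<Rightarrow> real) set" where
  "payoffs Q S = {X. (\<exists>g. g \<in> borel_measurable borel \<and> (\<forall>x\<ge>0. 0 \<le> g x)
        \<and> (\<forall>\<omega>\<in>space Q. X \<omega> = g (S \<omega>))) \<and> integrable Q X}"

definition price :: "real \<Rightarrow> real \<Rightarrow> 'a measure \<Rightarrow> ('a \<Rightarrow> real) \<Rightarrow> real" where
  "price r T Q X = exp (- r * T) * (\<integral>\<omega>. X \<omega> \<partial>Q)"

definition cost_efficient ::
  "real \<Rightarrow> real \<Rightarrow> 'a measure \<Rightarrow> ('a \<Rightarrow> real) \<Rightarrow> 'a measure \<Rightarrow> ('a \<Rightarrow> real) \<Rightarrow> bool" where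
  "cost_efficient r T Q S P X \<longleftrightarrow> X \<in> payoffs Q S \<and>
     (\<forall>Y\<in>payoffs Q S. cdf_of P Y = cdf_of P X \<longrightarrow> price r T Q X \<le> price r T Q Y)"

definition composition_consistent :: "(real \<Rightarrow> real) set \<Rightarrow> bool" where
  "composition_consistent FF \<longleftrightarrow> (\<forall>f\<in>FF. \<forall>g\<in>FF. f \<circ> g \<in> FF)"

definition cost_consistent ::
  "real \<Rightarrow> real \<Rightarrow> 'a measure \<Rightarrow> ('a \<Rightarrow> real) \<Rightarrow> 'a measure set \<Rightarrow> (real \<Rightarrow> real) set \<Rightarrow> bool" where
  "cost_consistent r T Q S PP FF \<longleftrightarrow>
     (\<forall>X\<in>payoffs Q S. \<forall>Y\<in>payoffs Q S. \<forall>P\<in>PP.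
        cost_efficient r T Q S P X \<and> cost_efficient r T Q S P Y \<and>
        stoch_le FF (cdf_of P X) (cdf_of P Y) \<longrightarrow>
          (\<integral>\<omega>. X \<omega> \<partial>Q) \<le> (\<integral>\<omega>. Y \<omega> \<partial>Q) \<and>
          (cdf_of P X \<noteq> cdf_of P Y \<longrightarrow> (\<integral>\<omega>. X \<omega> \<partial>Q) < (\<integral>\<omega>. Y \<omega> \<partial>Q)))"

definition least_favorable ::
  "'a measure \<Rightarrow> 'a measure set \<Rightarrow> (real \<Rightarrow> real) set \<Rightarrow> 'a measure \<Rightarrow> bool" where
  "least_favorable Q PP FF Ps \<longleftrightarrow> Ps \<in> PP \<and>
     (\<forall>P\<in>PP. stoch_le FF (cdf_of Ps (lr Q Ps)) (cdf_of P (lr Q Ps)))"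

definition robust_feasible ::
  "'a measure \<Rightarrow> ('a \<Rightarrow> real) \<Rightarrow> 'a measure set \<Rightarrow> (real \<Rightarrow> real) set \<Rightarrow> (real \<Rightarrow> real) \<Rightarrow> ('a \<Rightarrow> real) set" where
  "robust_feasible Q S PP FF F0 = {X \<in> payoffs Q S. \<forall>P\<in>PP. stoch_le FF F0 (cdf_of P X)}"

definition robust_solution ::
  "real \<Rightarrow> real \<Rightarrow> 'a measure \<Rightarrow> ('a \<Rightarrow> real) \<Rightarrow> 'a measure set \<Rightarrow> (real \<Rightarrow> real) set
     \<Rightarrow> (real \<Rightarrow> real) \<Rightarrow> ('a \<Rightarrow> real) \<Rightarrow> bool" where
  "robust_solution r T Q S PP FF F0 X \<longleftrightarrow> X \<in> robust_feasible Q S PP FF F0 \<and>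
     (\<forall>Y\<in>robust_feasible Q S PP FF F0. price r T Q X \<le> price r T Q Y)"

end

theory Submission
  imports Defs
begin

text \<open>Under \<open>\<P>\<^sup>*\<close> the price of a payoff \<open>X \<ge> 0\<close> is \<open>E[X / \<ell>]\<close> with \<open>\<ell> = d\<P>\<^sup>*/d\<Q>\<close>.
  Writing \<open>X\<close> as the integral over \<open>t \<ge> 0\<close> of the indicators of \<open>{t < X}\<close>, each such event
  competes with the upper level set of \<open>\<ell>\<close> of the same probability, which by the Neyman--Pearson
  lemma has the least weight \<open>1 / \<ell>\<close>. Hence \<open>G\<^sup>-\<^sup>1(F\<^sub>\<ell>(\<ell>))\<close> is the a.s.\ unique cheapest payoff
  whose \<open>\<P>\<^sup>*\<close>-law is \<open>G\<close>. The candidate \<open>X\<^sup>* = F\<^sub>0\<^sup>-\<^sup>1(F\<^sub>\<ell>(\<ell>))\<close> has \<open>\<P>\<^sup>*\<close>-law \<open>F\<^sub>0\<close>, and being the image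
  of \<open>\<ell>\<close> under a fixed map in \<open>FF\<close>, it inherits the ordering \<open>F\<^sub>0 \<preceq> F\<^sub>X\<^sub>*\<^sup>P\<close> from the least favorable
  property of \<open>\<P>\<^sup>*\<close>. For any feasible \<open>X\<close>, cost consistency makes \<open>X\<^sup>*\<close> cheaper than the cheapest
  payoff with the \<open>\<P>\<^sup>*\<close>-law of \<open>X\<close>, strictly unless that law is \<open>F\<^sub>0\<close>.\<close>

lemma (in prob_space) AE_in_iff_of_prob_eq_0_or_1:
  assumes "A \<in> events" "B \<in> events" "prob A = prob B" "prob B = 0 \<or> prob B = 1"
  shows "AE \<omega> in M. \<omega> \<in> A \<longleftrightarrow> \<omega> \<in> B"
proof (cases "prob B = 0")
  case True
  then have "A \<in> null_sets M" "B \<in> null_sets M"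
    using assms by (auto simp: null_sets_def emeasure_eq_measure)
  from AE_not_in[OF this(1)] AE_not_in[OF this(2)] show ?thesis by eventually_elim auto
next
  case False
  then have "prob (space M - A) = 0" "prob (space M - B) = 0"
    using assms by (auto simp: prob_compl)
  then have "space M - A \<in> null_sets M" "space M - B \<in> null_sets M"
    using assms by (auto simp: null_sets_def emeasure_eq_measure)
  from AE_not_in[OF this(1)] AE_not_in[OF this(2)] AE_space show ?thesis by eventually_elim auto
qed

lemma nn_integral_eq_imp_AE_eq:
  fixes f g :: "'a \<Rightarrow> ennreal"
  assumes [measurable]: "f \<in> borel_measurable M" "g \<in> borel_measurable M"
    and le: "\<And>x. f x \<le> g x" and finite: "(\<integral>\<^sup>+x. g x \<partial>M) < \<infinity>"
    and eq: "(\<integral>\<^sup>+x. f x \<partial>M) = (\<integral>\<^sup>+x. g x \<partial>M)"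
  shows "AE x in M. f x = g x"
proof -
  have "(\<integral>\<^sup>+x. g x \<partial>M) = (\<integral>\<^sup>+x. f x + (g x - f x) \<partial>M)"
    using le by (intro nn_integral_cong) (simp add: add_diff_inverse_ennreal)
  also have "\<dots> = (\<integral>\<^sup>+x. f x \<partial>M) + (\<integral>\<^sup>+x. g x - f x \<partial>M)"
    by (rule nn_integral_add) auto
  finally have "(\<integral>\<^sup>+x. f x \<partial>M) + 0 = (\<integral>\<^sup>+x. f x \<partial>M) + (\<integral>\<^sup>+x. g x - f x \<partial>M)"
    using eq by simp
  then have "(\<integral>\<^sup>+x. g x - f x \<partial>M) = 0"
    using eq finite unfolding ennreal_add_left_cancel by auto
  then have "AE x in M. g x - f x = 0"
    by (subst (asm) nn_integral_0_iff_AE) auto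
  then show ?thesis
  proof eventually_elim
    case (elim x)
    then have "g x \<le> f x" by (intro ennreal_minus_eq_0)
    with le[of x] show ?case by (rule antisym)
  qed
qed

lemma eq_of_AE_lborel_less_iff:
  fixes a b :: real
  assumes "AE t in lborel. t < a \<longleftrightarrow> t < b"
  shows "a = b"
proof (rule ccontr)
  assume "a \<noteq> b"
  then have "min a b < max a b" by auto
  have "AE t in lborel. t \<notin> {min a b<..<max a b}"
    using assms by eventually_elim (auto simp: min_def max_def split: if_splits)
  then have "{min a b<..<max a b} \<in> null_sets lborel"
    by (subst AE_iff_null_sets) auto
  then have "emeasure lborel {min a b<..<max a b} = 0"
    by auto
  with \<open>min a b < max a b\<close> show False by simp
qed

lemma borel_measurable_vimage_algebra_factor:
  fixes f S :: "'a \<Rightarrow> real"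
  assumes sets_M: "sets M = sets (vimage_algebra (space M) S borel)"
    and [measurable]: "f \<in> borel_measurable M"
  obtains g where "g \<in> borel_measurable borel" and "\<And>\<omega>. \<omega> \<in> space M \<Longrightarrow> f \<omega> = g (S \<omega>)"
proof -
  have "\<exists>B\<in>sets borel. {\<omega>\<in>space M. f \<omega> \<le> real_of_rat q} = S -` B \<inter> space M" for q
  proof -
    have "{\<omega>\<in>space M. f \<omega> \<le> real_of_rat q} \<in> sets (vimage_algebra (space M) S borel)"
      unfolding sets_M[symmetric] by measurable
    then show ?thesis by (subst (asm) sets_vimage_algebra2) auto
  qed
  then obtain B where B: "\<And>q. B q \<in> sets borel"
    and level: "\<And>q. {\<omega>\<in>space M. f \<omega> \<le> real_of_rat q} = S -` B q \<inter> space M"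
    by metis
  \<comment> \<open>\<open>f \<omega>\<close> is the infimum of the rationals \<open>q\<close> with \<open>S \<omega> \<in> B q\<close>.\<close>
  define g' where "g' x = (INF q. if x \<in> B q then ereal (real_of_rat q) else \<infinity>)" for x
  have "(\<lambda>x. if x \<in> B q then ereal (real_of_rat q) else \<infinity>) \<in> borel_measurable borel" for q
    using B[of q] by measurable
  then have "g' \<in> borel_measurable borel"
    unfolding g'_def by (intro borel_measurable_INF) auto
  then have g_measurable: "(\<lambda>x. real_of_ereal (g' x)) \<in> borel_measurable borel"
    by measurable
  have "g' (S \<omega>) = ereal (f \<omega>)" if \<omega>: "\<omega> \<in> space M" for \<omega>
  proof (rule antisym)
    have mem: "S \<omega> \<in> B q \<longleftrightarrow> f \<omega> \<le> real_of_rat q" for q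
      using level[of q] \<omega> by blast
    show "ereal (f \<omega>) \<le> g' (S \<omega>)"
      unfolding g'_def by (rule INF_greatest) (auto simp: mem)
    show "g' (S \<omega>) \<le> ereal (f \<omega>)"
    proof (rule dense_ge)
      fix x :: ereal assume x: "ereal (f \<omega>) < x"
      show "g' (S \<omega>) \<le> x"
      proof (cases x)
        case (real r)
        with x obtain q where "f \<omega> < real_of_rat q" "real_of_rat q < r"
          using of_rat_dense by auto
        then have "g' (S \<omega>) \<le> ereal (real_of_rat q)"
          unfolding g'_def by (intro INF_lower2[of q]) (auto simp: mem)
        then show ?thesis using \<open>real_of_rat q < r\<close> real by (metis ereal_less_eq(3) less_imp_le order_trans)
      qed (use x in auto)
    qed
  qed
  then show ?thesis
    using that[OF g_measurable] by simp
qed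

lemma AE_transfer_null_sets:
  assumes "sets M = sets N" and "null_sets M = null_sets N" and "AE x in M. P x"
  shows "AE x in N. P x"
  using assms sets_eq_imp_space_eq[OF assms(1)] by (auto simp: eventually_ae_filter)

section \<open>Distribution functions and quantiles\<close>

lemma is_cdf_cdf:
  assumes "real_distribution M"
  shows "is_cdf (cdf M)"
proof -
  interpret real_distribution M by fact
  show ?thesis unfolding is_cdf_def
    using cdf_nondecreasing cdf_is_right_cont cdf_lim_at_bot cdf_lim_at_top_prob
    by (auto simp: mono_def)
qed

lemma is_cdf_interval_measure:
  assumes "is_cdf F"
  shows "real_distribution (interval_measure F)" and "cdf (interval_measure F) = F"
  using assms unfolding is_cdf_def
  by (auto intro!: real_distribution_interval_measure cdf_interval_measure simp: mono_def)

lemma interval_measure_cdf: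
  assumes "real_distribution M"
  shows "interval_measure (cdf M) = M"
  using assms is_cdf_interval_measure[OF is_cdf_cdf[OF assms]] by (metis cdf_unique)

lemma is_cdf_bounded:
  assumes "is_cdf G"
  shows "0 \<le> G x" and "G x \<le> 1"
proof -
  interpret real_distribution "interval_measure G" by (rule is_cdf_interval_measure(1)[OF assms])
  show "0 \<le> G x" "G x \<le> 1"
    using cdf_nonneg[of x] cdf_bounded_prob[of x] by (simp_all add: is_cdf_interval_measure(2)[OF assms])
qed

lemma cdf_of_nonneg_rv_neg:
  assumes "X \<in> borel_measurable P" and "\<forall>\<omega>\<in>space P. 0 \<le> X \<omega>" and "x < 0"
  shows "cdf_of P X x = 0"
proof -
  have "cdf_of P X x = measure P {\<omega>\<in>space P. X \<omega> \<le> x}"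
    using assms(1) by (simp add: cdf_of_def cdf_def measure_distr vimage_def Int_def conj_commute)
  also have "{\<omega>\<in>space P. X \<omega> \<le> x} = {}"
    using assms by force
  finally show ?thesis by simp
qed

lemma stoch_le_distr:
  assumes "real_distribution \<mu>" "real_distribution \<nu>"
    and "composition_consistent FF" "FF \<subseteq> borel_measurable borel" "h \<in> FF"
    and "stoch_le FF (cdf \<mu>) (cdf \<nu>)"
  shows "stoch_le FF (cdf (distr \<mu> borel h)) (cdf (distr \<nu> borel h))"
  unfolding stoch_le_def
proof (intro ballI impI)
  fix f assume "f \<in> FF"
    and integrable: "integrable (interval_measure (cdf (distr \<mu> borel h))) f
      \<and> integrable (interval_measure (cdf (distr \<nu> borel h))) f"
  have [measurable]: "f \<in> borel_measurable borel" "h \<in> borel_measurable borel"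
    using assms \<open>f \<in> FF\<close> by auto
  have "f \<circ> h \<in> FF"
    using assms \<open>f \<in> FF\<close> unfolding composition_consistent_def by blast
  have [measurable_cong]: "sets \<mu> = sets borel" "sets \<nu> = sets borel"
    using assms(1,2) by (simp_all add: real_distribution.events_eq_borel)
  have [simp]: "interval_measure (cdf \<mu>) = \<mu>" "interval_measure (cdf \<nu>) = \<nu>"
    "interval_measure (cdf (distr \<mu> borel h)) = distr \<mu> borel h"
    "interval_measure (cdf (distr \<nu> borel h)) = distr \<nu> borel h"
    using assms
    by (auto intro!: interval_measure_cdf prob_space.real_distribution_distr real_distribution.axioms(1))
  have "integrable \<mu> (f \<circ> h)" "integrable \<nu> (f \<circ> h)"
    using integrable by (simp_all add: integrable_distr_eq comp_def)
  then have "(\<integral>x. (f \<circ> h) x \<partial>\<mu>) \<le> (\<integral>x. (f \<circ> h) x \<partial>\<nu>)"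
    using assms(6) \<open>f \<circ> h \<in> FF\<close> unfolding stoch_le_def by (simp del: comp_apply)
  then show "(\<integral>x. f x \<partial>interval_measure (cdf (distr \<mu> borel h)))
      \<le> (\<integral>x. f x \<partial>interval_measure (cdf (distr \<nu> borel h)))"
    by (simp add: integral_distr comp_def)
qed

lemma
  assumes "is_cdf G" and "0 < u" "u < 1"
  shows quantile_set_nonempty: "{x. u \<le> G x} \<noteq> {}"
    and bdd_below_quantile_set: "bdd_below {x. u \<le> G x}"
proof -
  have "eventually (\<lambda>x. u < G x) at_top"
    using assms by (intro order_tendstoD(1)) (auto simp: is_cdf_def)
  then obtain b where "u < G b"
    by (auto simp: eventually_at_top_linorder)
  then show "{x. u \<le> G x} \<noteq> {}"
    by (auto intro: less_imp_le)
  have "eventually (\<lambda>x. G x < u) at_bot"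
    using assms by (intro order_tendstoD(2)) (auto simp: is_cdf_def)
  then obtain b where "\<And>x. x \<le> b \<Longrightarrow> G x < u"
    by (auto simp: eventually_at_bot_linorder)
  then have "\<forall>x\<in>{x. u \<le> G x}. b \<le> x"
    by (metis mem_Collect_eq nle_le not_less)
  then show "bdd_below {x. u \<le> G x}" by (auto simp: bdd_below_def)
qed

lemma le_cdf_quantile:
  assumes G: "is_cdf G" and "0 < u" "u < 1"
  shows "u \<le> G (quantile G u)"
proof -
  let ?q = "quantile G u"
  have "(G \<longlongrightarrow> G ?q) (at_right ?q)"
    using G by (simp add: is_cdf_def continuous_within)
  moreover have "eventually (\<lambda>y. u \<le> G y) (at_right ?q)"
  proof (rule eventually_at_rightI)
    fix y assume "y \<in> {?q<..<?q + 1}"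
    then obtain x where "u \<le> G x" "x < y"
      using quantile_set_nonempty[OF assms] bdd_below_quantile_set[OF assms]
      by (auto simp: quantile_def cInf_less_iff)
    then show "u \<le> G y"
      using G by (auto simp: is_cdf_def mono_def intro: order_trans)
  qed simp
  ultimately show ?thesis by (rule tendsto_lowerbound) simp
qed

lemma quantile_le_iff:
  assumes G: "is_cdf G" and "0 < u" "u < 1"
  shows "quantile G u \<le> t \<longleftrightarrow> u \<le> G t"
proof
  assume "quantile G u \<le> t"
  then show "u \<le> G t"
    using le_cdf_quantile[OF assms] G by (auto simp: is_cdf_def mono_def intro: order_trans)
next
  assume "u \<le> G t"
  then show "quantile G u \<le> t"
    unfolding quantile_def by (intro cInf_lower bdd_below_quantile_set[OF assms]) simp
qed

lemma quantile_mono_on: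
  assumes "is_cdf G"
  shows "mono_on {0<..<1} (quantile G)"
  using le_cdf_quantile[OF assms] quantile_le_iff[OF assms]
  by (intro mono_onI) (auto intro: order_trans)

lemma quantile_nonneg:
  assumes "is_cdf G" "\<forall>x<0. G x = 0" and "0 < u" "u < 1"
  shows "0 \<le> quantile G u"
  using le_cdf_quantile[OF assms(1,3,4)] assms(2,3) by (metis not_le order.strict_iff_not)

text \<open>A total, nonnegative and Borel measurable version of \<open>quantile\<close>: outside \<open>]0,1[\<close>
  the infimum defining \<open>quantile\<close> is taken over an empty or unbounded set.\<close>
definition pos_quantile :: "(real \<Rightarrow> real) \<Rightarrow> real \<Rightarrow> real" where
  "pos_quantile G u = (if 0 < u \<and> u < 1 then max 0 (quantile G u) else 0)"

lemma pos_quantile_nonneg: "0 \<le> pos_quantile G u"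
  by (simp add: pos_quantile_def)

lemma borel_measurable_pos_quantile[measurable]:
  assumes "is_cdf G"
  shows "pos_quantile G \<in> borel_measurable borel"
proof -
  have "mono_on {0<..<1} (\<lambda>u. max 0 (quantile G u))"
    using quantile_mono_on[OF assms] unfolding mono_on_def by (metis max.mono order_refl)
  then have "(\<lambda>u. max 0 (quantile G u)) \<in> borel_measurable (restrict_space borel {0<..<1})"
    by (rule borel_measurable_mono_on_fnc)
  then have "(\<lambda>u. indicator {0<..<1} u *\<^sub>R max 0 (quantile G u)) \<in> borel_measurable borel"
    by (subst (asm) borel_measurable_restrict_space_iff) auto
  also have "(\<lambda>u. indicator {0<..<1} u *\<^sub>R max 0 (quantile G u)) = pos_quantile G"
    by (auto simp: pos_quantile_def fun_eq_iff indicator_def)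
  finally show ?thesis .
qed

lemma less_pos_quantile_iff:
  assumes "is_cdf G" "0 < u" "u < 1" "0 \<le> t"
  shows "t < pos_quantile G u \<longleftrightarrow> G t < u"
  using quantile_le_iff[OF assms(1-3), of t] assms by (auto simp: pos_quantile_def)

lemma pos_quantile_le_iff:
  assumes "is_cdf G" "\<forall>x<0. G x = 0" "0 < u" "u < 1"
  shows "pos_quantile G u \<le> t \<longleftrightarrow> u \<le> G t"
  using less_pos_quantile_iff[OF assms(1,3,4), of t] pos_quantile_nonneg[of G u] assms(2,3)
  by (cases "0 \<le> t") auto

lemma pos_quantile_eq_quantile:
  assumes "is_cdf G" "\<forall>x<0. G x = 0" "0 < u" "u < 1"
  shows "pos_quantile G u = quantile G u"
  using quantile_nonneg[OF assms] assms(3,4) by (simp add: pos_quantile_def)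

section \<open>The probability integral transform\<close>

locale continuous_cdf_rv = prob_space M for M :: "'a measure" +
  fixes L :: "'a \<Rightarrow> real"
  assumes measurable_L[measurable]: "L \<in> borel_measurable M"
    and continuous_cdf: "continuous_on UNIV (cdf (distr M borel L))"
begin

abbreviation FL :: "real \<Rightarrow> real" where
  "FL \<equiv> cdf (distr M borel L)"

lemma is_cdf_FL: "is_cdf FL"
  by (rule is_cdf_cdf) simp

lemma FL_mono: "x \<le> y \<Longrightarrow> FL x \<le> FL y"
  using is_cdf_FL by (auto simp: is_cdf_def mono_def)

lemma isCont_FL: "isCont FL x"
  using continuous_cdf by (simp add: continuous_on_eq_continuous_at)

lemma borel_measurable_FL[measurable]: "FL \<in> borel_measurable borel"
  using isCont_FL by (intro borel_measurable_continuous_onI continuous_at_imp_continuous_on) auto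

lemma FL_eq_prob: "FL x = prob {\<omega>\<in>space M. L \<omega> \<le> x}"
  by (simp add: cdf_def measure_distr vimage_def Int_def conj_commute)

lemma prob_L_eq: "prob {\<omega>\<in>space M. L \<omega> = c} = 0"
proof -
  interpret D: real_distribution "distr M borel L" by simp
  have "measure (distr M borel L) {c} = 0"
    using isCont_FL D.isCont_cdf by blast
  then show ?thesis by (simp add: measure_distr vimage_def Int_def conj_commute)
qed

lemma FL_level_set:
  assumes "0 < a" "a < 1"
  obtains c where "FL c = a" and "\<And>x. FL x \<le> a \<longleftrightarrow> x \<le> c"
proof -
  let ?C = "{x. FL x \<le> a}"
  have "eventually (\<lambda>x. FL x < a) at_bot"
    using is_cdf_FL assms by (intro order_tendstoD(2)) (auto simp: is_cdf_def)
  then have nonempty: "?C \<noteq> {}"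
    by (auto simp: eventually_at_bot_linorder intro: less_imp_le)
  have "eventually (\<lambda>x. a < FL x) at_top"
    using is_cdf_FL assms by (intro order_tendstoD(1)) (auto simp: is_cdf_def)
  then obtain b where "\<And>x. b \<le> x \<Longrightarrow> a < FL x"
    by (auto simp: eventually_at_top_linorder)
  then have bdd: "bdd_above ?C"
    by (metis bdd_aboveI mem_Collect_eq nle_le not_less)
  have "closed ?C"
    using continuous_cdf by (intro closed_Collect_le continuous_on_const) auto
  define c where "c = Sup ?C"
  have "c \<in> ?C"
    unfolding c_def using nonempty bdd \<open>closed ?C\<close> by (rule closed_contains_Sup)
  have upper: "x \<le> c" if "FL x \<le> a" for x
    unfolding c_def using bdd that by (intro cSup_upper) auto
  have "a \<le> FL c"
  proof (rule tendsto_lowerbound)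
    show "(FL \<longlongrightarrow> FL c) (at_right c)"
      using isCont_FL by (simp add: isCont_def filterlim_at_split)
    show "eventually (\<lambda>x. a \<le> FL x) (at_right c)"
    proof (rule eventually_at_rightI[where b="c + 1"])
      fix x assume "x \<in> {c<..<c + 1}"
      then show "a \<le> FL x" by (cases "FL x \<le> a") (auto dest: upper)
    qed simp
  qed simp
  with \<open>c \<in> ?C\<close> have "FL c = a" by simp
  moreover have "FL x \<le> a \<longleftrightarrow> x \<le> c" for x
    using upper FL_mono[of x c] \<open>FL c = a\<close> by auto
  ultimately show ?thesis by (rule that)
qed

lemma prob_FL_le:
  assumes "0 \<le> a" "a \<le> 1"
  shows "prob {\<omega>\<in>space M. FL (L \<omega>) \<le> a} = a"
proof -
  have mid: "prob {\<omega>\<in>space M. FL (L \<omega>) \<le> a} = a" if a: "0 < a" "a < 1" for a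
  proof -
    obtain c where "FL c = a" "\<And>x. FL x \<le> a \<longleftrightarrow> x \<le> c"
      using FL_level_set[OF a] by blast
    then show ?thesis by (simp add: FL_eq_prob)
  qed
  have zero: "prob {\<omega>\<in>space M. FL (L \<omega>) \<le> 0} = 0"
  proof (rule antisym[OF field_le_epsilon measure_nonneg])
    fix e :: real assume "0 < e"
    show "prob {\<omega>\<in>space M. FL (L \<omega>) \<le> 0} \<le> 0 + e"
    proof (cases "e < 1")
      case True
      have "prob {\<omega>\<in>space M. FL (L \<omega>) \<le> 0} \<le> prob {\<omega>\<in>space M. FL (L \<omega>) \<le> e}"
        using \<open>0 < e\<close> by (intro finite_measure_mono) auto
      with mid[of e] True \<open>0 < e\<close> show ?thesis by simp
    next
      case False
      then show ?thesis using prob_le_1[of "{\<omega>\<in>space M. FL (L \<omega>) \<le> 0}"] by linarith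
    qed
  qed
  have "{\<omega>\<in>space M. FL (L \<omega>) \<le> 1} = space M"
    using is_cdf_bounded(2)[OF is_cdf_FL] by auto
  then have one: "prob {\<omega>\<in>space M. FL (L \<omega>) \<le> 1} = 1"
    by (simp add: prob_space)
  show ?thesis
    using assms mid zero one by (cases "a = 0 \<or> a = 1") auto
qed

lemma prob_FL_less_1: "prob {\<omega>\<in>space M. FL (L \<omega>) < 1} = 1"
proof (rule antisym[OF prob_le_1 field_le_epsilon])
  fix e :: real assume "0 < e"
  show "1 \<le> prob {\<omega>\<in>space M. FL (L \<omega>) < 1} + e"
  proof (cases "e < 1")
    case True
    have "prob {\<omega>\<in>space M. FL (L \<omega>) \<le> 1 - e} \<le> prob {\<omega>\<in>space M. FL (L \<omega>) < 1}"
      using \<open>0 < e\<close> by (intro finite_measure_mono) auto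
    with prob_FL_le[of "1 - e"] True \<open>0 < e\<close> show ?thesis by simp
  next
    case False
    then show ?thesis using measure_nonneg[of M "{\<omega>\<in>space M. FL (L \<omega>) < 1}"] by linarith
  qed
qed

lemma AE_FL_in_unit: "AE \<omega> in M. 0 < FL (L \<omega>) \<and> FL (L \<omega>) < 1"
proof -
  have "{\<omega>\<in>space M. 0 < FL (L \<omega>)} = space M - {\<omega>\<in>space M. FL (L \<omega>) \<le> 0}"
    by auto
  then have "prob {\<omega>\<in>space M. 0 < FL (L \<omega>)} = 1"
    using prob_FL_le[of 0] by (simp add: prob_compl)
  then have "AE \<omega> in M. \<omega> \<in> {\<omega>\<in>space M. 0 < FL (L \<omega>)}"
    by (rule AE_prob_1)
  moreover have "AE \<omega> in M. \<omega> \<in> {\<omega>\<in>space M. FL (L \<omega>) < 1}"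
    using prob_FL_less_1 by (rule AE_prob_1)
  ultimately show ?thesis by eventually_elim auto
qed

lemma prob_FL_greater:
  assumes "0 \<le> a" "a \<le> 1"
  shows "prob {\<omega>\<in>space M. a < FL (L \<omega>)} = 1 - a"
proof -
  have "prob {\<omega>\<in>space M. a < FL (L \<omega>)} = prob (space M - {\<omega>\<in>space M. FL (L \<omega>) \<le> a})"
    by (intro arg_cong[where f=prob]) auto
  then show ?thesis using prob_FL_le[OF assms] by (simp add: prob_compl)
qed

lemma distributed_FL_uniform:
  "distributed M lborel (\<lambda>\<omega>. FL (L \<omega>)) (\<lambda>u. ennreal (indicator {0..1} u))"
  using uniform_distrI_borel_atLeastAtMost[of "\<lambda>\<omega>. FL (L \<omega>)" 0 1] prob_FL_le by simp

lemma cdf_pos_quantile_FL: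
  assumes G: "is_cdf G" "\<forall>x<0. G x = 0"
  shows "cdf (distr M borel (\<lambda>\<omega>. pos_quantile G (FL (L \<omega>)))) = G"
proof
  fix t
  note [measurable] = borel_measurable_pos_quantile[OF G(1)]
  have "cdf (distr M borel (\<lambda>\<omega>. pos_quantile G (FL (L \<omega>)))) t
      = prob {\<omega>\<in>space M. pos_quantile G (FL (L \<omega>)) \<le> t}"
    by (simp add: cdf_def measure_distr vimage_def Int_def conj_commute)
  also have "\<dots> = prob {\<omega>\<in>space M. FL (L \<omega>) \<le> G t}"
    by (rule finite_measure_eq_AE)
      (use AE_FL_in_unit in \<open>eventually_elim, auto simp: pos_quantile_le_iff[OF G(1,2)]\<close>)
  also have "\<dots> = G t"
    using prob_FL_le is_cdf_bounded[OF G(1)] by simp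
  finally show "cdf (distr M borel (\<lambda>\<omega>. pos_quantile G (FL (L \<omega>)))) t = G t" .
qed

lemma nn_integral_pos_quantile_FL_square:
  assumes G: "is_cdf G" "\<forall>x<0. G x = 0"
    and square_integrable: "set_integrable lborel {0<..<1} (\<lambda>u. (quantile G u)\<^sup>2)"
  shows "(\<integral>\<^sup>+\<omega>. ennreal ((pos_quantile G (FL (L \<omega>)))\<^sup>2) \<partial>M) < \<infinity>"
proof -
  note [measurable] = borel_measurable_pos_quantile[OF G(1)]
  have "(\<integral>\<^sup>+\<omega>. ennreal ((pos_quantile G (FL (L \<omega>)))\<^sup>2) \<partial>M)
      = (\<integral>\<^sup>+u. ennreal (indicator {0..1} u) * ennreal ((pos_quantile G u)\<^sup>2) \<partial>lborel)"
    by (rule distributed_nn_integral[OF distributed_FL_uniform, symmetric]) measurable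
  also have "\<dots> = (\<integral>\<^sup>+u. ennreal (norm (indicator {0<..<1} u *\<^sub>R (quantile G u)\<^sup>2)) \<partial>lborel)"
    by (intro nn_integral_cong)
      (auto simp: indicator_def pos_quantile_def quantile_nonneg[OF G])
  also have "\<dots> < \<infinity>"
    using square_integrable unfolding set_integrable_def integrable_iff_bounded by simp
  finally show ?thesis .
qed

end

section \<open>Neyman--Pearson and the rearrangement inequality\<close>

text \<open>With \<open>M = \<P>\<^sup>*\<close> and \<open>L = d\<P>\<^sup>*/d\<Q>\<close>, integrals against \<open>1 / L\<close> under \<open>M\<close> are
  expectations under \<open>\<Q>\<close>, i.e.\ prices.\<close>
locale rearrangement = continuous_cdf_rv +
  assumes AE_L_pos: "AE \<omega> in M. 0 < L \<omega>"
    and integrable_inv_L: "integrable M (\<lambda>\<omega>. 1 / L \<omega>)"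
begin

lemma integrable_indicator_inv_L: "A \<in> sets M \<Longrightarrow> integrable M (\<lambda>\<omega>. indicator A \<omega> * (1 / L \<omega>))"
  using integrable_real_mult_indicator[OF _ integrable_inv_L] by (simp add: mult.commute)

lemma integral_indicator_inv_L_nonneg: "0 \<le> (\<integral>\<omega>. indicator A \<omega> * (1 / L \<omega>) \<partial>M)"
  using AE_L_pos by (intro integral_nonneg_AE) (auto elim!: eventually_mono)

lemma nn_integral_indicator_inv_L:
  "A \<in> sets M \<Longrightarrow> (\<integral>\<^sup>+\<omega>. ennreal (indicator A \<omega> * (1 / L \<omega>)) \<partial>M)
     = ennreal (\<integral>\<omega>. indicator A \<omega> * (1 / L \<omega>) \<partial>M)"
  using AE_L_pos integrable_indicator_inv_L
  by (intro nn_integral_eq_integral) (auto elim!: eventually_mono)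

lemma obtain_L_pos:
  assumes "A \<in> sets M" and "prob A \<noteq> 0"
  obtains \<omega> where "\<omega> \<in> A" and "0 < L \<omega>"
proof (rule ccontr)
  assume "\<not> thesis"
  with that have "A \<subseteq> {\<omega>\<in>space M. \<not> 0 < L \<omega>}"
    using sets.sets_into_space[OF assms(1)] by auto
  moreover have null: "{\<omega>\<in>space M. \<not> 0 < L \<omega>} \<in> null_sets M"
    using AE_L_pos by (subst AE_iff_null[symmetric]) auto
  ultimately have "A \<in> null_sets M"
    using assms(1) by (intro null_sets_subset[OF null])
  then show False
    using assms(2) by (simp add: null_sets_def emeasure_eq_measure)
qed

lemma integral_indicator_inv_L_threshold:
  assumes [measurable]: "A \<in> sets M" "B \<in> sets M" and "prob A = prob B" and "0 < c"
    and below: "\<And>\<omega>. \<omega> \<in> space M - B \<Longrightarrow> L \<omega> \<le> c" and above: "\<And>\<omega>. \<omega> \<in> B \<Longrightarrow> c \<le> L \<omega>"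
  shows "(\<integral>\<omega>. indicator B \<omega> * (1 / L \<omega>) \<partial>M) \<le> (\<integral>\<omega>. indicator A \<omega> * (1 / L \<omega>) \<partial>M)"
    and "(\<integral>\<omega>. indicator B \<omega> * (1 / L \<omega>) \<partial>M) = (\<integral>\<omega>. indicator A \<omega> * (1 / L \<omega>) \<partial>M)
          \<Longrightarrow> AE \<omega> in M. \<omega> \<in> A \<longleftrightarrow> \<omega> \<in> B"
proof -
  let ?I = "\<lambda>E. \<integral>\<omega>. indicator E \<omega> * (1 / L \<omega>) \<partial>M"
  define g where "g \<omega> = (indicator A \<omega> - indicator B \<omega>) * (1 / L \<omega> - 1 / c)" for \<omega>
  \<comment> \<open>\<open>g \<ge> 0\<close>: the factors change sign together as \<open>L \<omega>\<close> crosses the threshold \<open>c\<close>.\<close>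
  have g_nonneg: "AE \<omega> in M. 0 \<le> g \<omega>"
    using AE_L_pos AE_space
  proof eventually_elim
    case (elim \<omega>)
    then show ?case
      using below[of \<omega>] above[of \<omega>] \<open>0 < c\<close>
      by (auto simp: g_def indicator_def divide_simps)
  qed
  have g_eq: "g \<omega> = indicator A \<omega> * (1 / L \<omega>) - indicator B \<omega> * (1 / L \<omega>)
      - (indicator A \<omega> - indicator B \<omega>) / c" for \<omega>
    by (simp add: g_def algebra_simps diff_divide_distrib)
  have integrable_g: "integrable M g"
    unfolding g_eq[abs_def] using integrable_indicator_inv_L by (auto simp: emeasure_eq_measure)
  have "(\<integral>\<omega>. g \<omega> \<partial>M) = ?I A - ?I B - (prob A - prob B) / c"
    unfolding g_eq using integrable_indicator_inv_L
    by (simp add: emeasure_eq_measure Bochner_Integration.integral_diff)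
  then have integral_g: "(\<integral>\<omega>. g \<omega> \<partial>M) = ?I A - ?I B"
    using \<open>prob A = prob B\<close> by simp
  show "?I B \<le> ?I A"
    using integral_nonneg_AE[OF g_nonneg] integral_g by simp
  assume "?I B = ?I A"
  then have "AE \<omega> in M. g \<omega> = 0"
    using integral_nonneg_eq_0_iff_AE[OF integrable_g g_nonneg] integral_g by simp
  moreover have "AE \<omega> in M. L \<omega> \<noteq> c"
    using prob_L_eq[of c] by (subst AE_iff_measurable[OF _ refl]) (auto simp: emeasure_eq_measure)
  ultimately show "AE \<omega> in M. \<omega> \<in> A \<longleftrightarrow> \<omega> \<in> B"
    using AE_L_pos by eventually_elim (auto simp: g_def indicator_def split: if_splits)
qed

lemma neyman_pearson:
  assumes [measurable]: "A \<in> sets M" "B \<in> sets M" and "prob A = prob B"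
    and upper: "\<And>\<omega> \<omega>'. \<omega> \<in> B \<Longrightarrow> \<omega>' \<in> space M - B \<Longrightarrow> L \<omega>' < L \<omega>"
  shows "(\<integral>\<omega>. indicator B \<omega> * (1 / L \<omega>) \<partial>M) \<le> (\<integral>\<omega>. indicator A \<omega> * (1 / L \<omega>) \<partial>M)"
    and "(\<integral>\<omega>. indicator B \<omega> * (1 / L \<omega>) \<partial>M) = (\<integral>\<omega>. indicator A \<omega> * (1 / L \<omega>) \<partial>M)
          \<Longrightarrow> AE \<omega> in M. \<omega> \<in> A \<longleftrightarrow> \<omega> \<in> B"
proof -
  let ?I = "\<lambda>E. \<integral>\<omega>. indicator E \<omega> * (1 / L \<omega>) \<partial>M"
  have "?I B \<le> ?I A \<and> (?I B = ?I A \<longrightarrow> (AE \<omega> in M. \<omega> \<in> A \<longleftrightarrow> \<omega> \<in> B))"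
  proof (cases "prob B = 0 \<or> prob B = 1")
    case True
    then have AE_eq: "AE \<omega> in M. \<omega> \<in> A \<longleftrightarrow> \<omega> \<in> B"
      using \<open>prob A = prob B\<close> by (intro AE_in_iff_of_prob_eq_0_or_1) auto
    then have "?I B = ?I A"
      by (intro integral_cong_AE) (auto elim!: eventually_mono simp: indicator_def)
    with AE_eq show ?thesis by simp
  next
    case False
    then have "B \<noteq> {}"
      by (metis measure_empty)
    then obtain \<omega>\<^sub>B where "\<omega>\<^sub>B \<in> B"
      by blast
    have "prob (space M - B) \<noteq> 0"
      using False by (simp add: prob_compl)
    then obtain \<omega>\<^sub>0 where "\<omega>\<^sub>0 \<in> space M - B" "0 < L \<omega>\<^sub>0"
      by (rule obtain_L_pos[OF sets.compl_sets[OF assms(2)]])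
    define c where "c = Sup (L ` (space M - B))"
    have bdd: "bdd_above (L ` (space M - B))"
      using upper[OF \<open>\<omega>\<^sub>B \<in> B\<close>] by (auto intro!: bdd_aboveI[of _ "L \<omega>\<^sub>B"] less_imp_le)
    have below: "L \<omega> \<le> c" if "\<omega> \<in> space M - B" for \<omega>
      unfolding c_def using bdd that by (auto intro: cSup_upper)
    have above: "c \<le> L \<omega>" if "\<omega> \<in> B" for \<omega>
      unfolding c_def using \<open>\<omega>\<^sub>0 \<in> space M - B\<close> upper[OF that]
      by (intro cSup_least) (auto intro: less_imp_le)
    have "0 < c"
      using below[OF \<open>\<omega>\<^sub>0 \<in> space M - B\<close>] \<open>0 < L \<omega>\<^sub>0\<close> by simp
    from integral_indicator_inv_L_threshold[OF assms(1-3) this below above] show ?thesis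
      by blast
  qed
  then show "?I B \<le> ?I A" and "?I B = ?I A \<Longrightarrow> AE \<omega> in M. \<omega> \<in> A \<longleftrightarrow> \<omega> \<in> B"
    by auto
qed

definition upper_weight :: "('a \<Rightarrow> real) \<Rightarrow> real \<Rightarrow> ennreal" where
  "upper_weight V t = (\<integral>\<^sup>+\<omega>. ennreal (if 0 \<le> t \<and> t < V \<omega> then 1 / L \<omega> else 0) \<partial>M)"

lemma upper_weight_neg: "t < 0 \<Longrightarrow> upper_weight V t = 0"
  by (simp add: upper_weight_def)

lemma pair_sigma_finite_lborel: "pair_sigma_finite lborel M"
  by (intro pair_sigma_finite.intro sigma_finite_lborel prob_space_imp_sigma_finite prob_space_axioms)

lemma borel_measurable_upper_weight[measurable]:
  assumes [measurable]: "V \<in> borel_measurable M"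
  shows "upper_weight V \<in> borel_measurable borel"
proof -
  interpret pair_sigma_finite lborel M by (rule pair_sigma_finite_lborel)
  have "(\<lambda>t. \<integral>\<^sup>+\<omega>. ennreal (if 0 \<le> t \<and> t < V \<omega> then 1 / L \<omega> else 0) \<partial>M) \<in> borel_measurable lborel"
    by measurable
  then show ?thesis unfolding upper_weight_def by simp
qed

lemma nn_integral_layer_cake:
  assumes [measurable]: "V \<in> borel_measurable M" and nonneg: "\<forall>\<omega>\<in>space M. 0 \<le> V \<omega>"
  shows "(\<integral>\<^sup>+\<omega>. ennreal (V \<omega>) * ennreal (1 / L \<omega>) \<partial>M) = (\<integral>\<^sup>+t. upper_weight V t \<partial>lborel)"
proof -
  interpret pair_sigma_finite lborel M by (rule pair_sigma_finite_lborel)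
  have slice: "(\<integral>\<^sup>+t. ennreal (if 0 \<le> t \<and> t < v then w else 0) \<partial>lborel) = ennreal v * ennreal w"
    if "0 \<le> v" for v w :: real
  proof -
    have "(\<lambda>t. ennreal (if 0 \<le> t \<and> t < v then w else 0)) = (\<lambda>t. ennreal w * indicator {0..<v} t)"
      by (auto simp: indicator_def fun_eq_iff)
    then show ?thesis using that by (simp add: nn_integral_cmult_indicator mult.commute)
  qed
  have "(\<integral>\<^sup>+\<omega>. ennreal (V \<omega>) * ennreal (1 / L \<omega>) \<partial>M) =
        (\<integral>\<^sup>+\<omega>. (\<integral>\<^sup>+t. ennreal (if 0 \<le> t \<and> t < V \<omega> then 1 / L \<omega> else 0) \<partial>lborel) \<partial>M)"
    using nonneg by (intro nn_integral_cong) (simp add: slice)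
  also have "\<dots> = (\<integral>\<^sup>+t. (\<integral>\<^sup>+\<omega>. ennreal (if 0 \<le> t \<and> t < V \<omega> then 1 / L \<omega> else 0) \<partial>M) \<partial>lborel)"
    by (rule Fubini'[where f="\<lambda>t \<omega>. ennreal (if 0 \<le> t \<and> t < V \<omega> then 1 / L \<omega> else 0)"]) measurable
  finally show ?thesis by (simp add: upper_weight_def)
qed

text \<open>On each level \<open>t\<close>, the event \<open>{t < Y}\<close> is replaced by an upper level set of \<open>L\<close> of the
  same probability, which by Neyman--Pearson has the least weight.\<close>
lemma upper_weight_rearranged:
  assumes [measurable]: "Y \<in> borel_measurable M" and "0 \<le> t"
  defines "G \<equiv> cdf (distr M borel Y)"
  shows "upper_weight (\<lambda>\<omega>. pos_quantile G (FL (L \<omega>))) t \<le> upper_weight Y t"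
    and "upper_weight (\<lambda>\<omega>. pos_quantile G (FL (L \<omega>))) t = upper_weight Y t
          \<Longrightarrow> AE \<omega> in M. t < Y \<omega> \<longleftrightarrow> t < pos_quantile G (FL (L \<omega>))"
proof -
  have G: "is_cdf G" unfolding G_def by (rule is_cdf_cdf) simp
  note [measurable] = borel_measurable_pos_quantile[OF G]
  define A where "A = {\<omega>\<in>space M. t < Y \<omega>}"
  define B where "B = {\<omega>\<in>space M. G t < FL (L \<omega>)}"
  have [measurable]: "A \<in> sets M" "B \<in> sets M" unfolding A_def B_def by measurable
  have "prob A = prob (space M - {\<omega>\<in>space M. Y \<omega> \<le> t})"
    unfolding A_def by (intro arg_cong[where f=prob]) auto
  also have "\<dots> = 1 - prob {\<omega>\<in>space M. Y \<omega> \<le> t}"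
    by (rule prob_compl) measurable
  also have "\<dots> = 1 - G t"
    by (simp add: G_def cdf_def measure_distr vimage_def Int_def conj_commute)
  also have "\<dots> = prob B"
    unfolding B_def using prob_FL_greater is_cdf_bounded[OF G] by simp
  finally have "prob A = prob B" .
  have upper: "L \<omega>' < L \<omega>" if "\<omega> \<in> B" "\<omega>' \<in> space M - B" for \<omega> \<omega>'
    using that FL_mono[of "L \<omega>" "L \<omega>'"] unfolding B_def by (cases "L \<omega>' < L \<omega>") auto
  have weight_Y: "upper_weight Y t = ennreal (\<integral>\<omega>. indicator A \<omega> * (1 / L \<omega>) \<partial>M)"
    unfolding upper_weight_def nn_integral_indicator_inv_L[symmetric, OF \<open>A \<in> sets M\<close>]
    using \<open>0 \<le> t\<close> by (intro nn_integral_cong) (auto simp: A_def indicator_def)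
  have weight_Z: "upper_weight (\<lambda>\<omega>. pos_quantile G (FL (L \<omega>))) t
      = ennreal (\<integral>\<omega>. indicator B \<omega> * (1 / L \<omega>) \<partial>M)"
    unfolding upper_weight_def nn_integral_indicator_inv_L[symmetric, OF \<open>B \<in> sets M\<close>]
    using AE_FL_in_unit AE_space
    by (intro nn_integral_cong_AE, eventually_elim)
      (auto simp: B_def indicator_def less_pos_quantile_iff[OF G _ _ \<open>0 \<le> t\<close>] \<open>0 \<le> t\<close>)
  note np = neyman_pearson[OF \<open>A \<in> sets M\<close> \<open>B \<in> sets M\<close> \<open>prob A = prob B\<close> upper]
  show "upper_weight (\<lambda>\<omega>. pos_quantile G (FL (L \<omega>))) t \<le> upper_weight Y t"
    unfolding weight_Y weight_Z using np(1) by (rule ennreal_leI)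
  assume "upper_weight (\<lambda>\<omega>. pos_quantile G (FL (L \<omega>))) t = upper_weight Y t"
  then have "AE \<omega> in M. \<omega> \<in> A \<longleftrightarrow> \<omega> \<in> B"
    unfolding weight_Y weight_Z using integral_indicator_inv_L_nonneg np(2) by simp
  then show "AE \<omega> in M. t < Y \<omega> \<longleftrightarrow> t < pos_quantile G (FL (L \<omega>))"
    using AE_FL_in_unit AE_space
    by eventually_elim (auto simp: A_def B_def less_pos_quantile_iff[OF G _ _ \<open>0 \<le> t\<close>])
qed

lemma upper_weight_rearranged_le:
  assumes "Y \<in> borel_measurable M"
  shows "upper_weight (\<lambda>\<omega>. pos_quantile (cdf (distr M borel Y)) (FL (L \<omega>))) t \<le> upper_weight Y t"
  using upper_weight_rearranged(1)[OF assms, of t] upper_weight_neg[of t] by (cases "0 \<le> t") auto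

theorem rearrangement_inequality:
  assumes [measurable]: "Y \<in> borel_measurable M" and "\<forall>\<omega>\<in>space M. 0 \<le> Y \<omega>"
  defines "G \<equiv> cdf (distr M borel Y)"
  shows "(\<integral>\<^sup>+\<omega>. ennreal (pos_quantile G (FL (L \<omega>))) * ennreal (1 / L \<omega>) \<partial>M)
      \<le> (\<integral>\<^sup>+\<omega>. ennreal (Y \<omega>) * ennreal (1 / L \<omega>) \<partial>M)"
proof -
  have G: "is_cdf G" unfolding G_def by (rule is_cdf_cdf) simp
  note [measurable] = borel_measurable_pos_quantile[OF G]
  have "(\<integral>\<^sup>+\<omega>. ennreal (pos_quantile G (FL (L \<omega>))) * ennreal (1 / L \<omega>) \<partial>M)
      = (\<integral>\<^sup>+t. upper_weight (\<lambda>\<omega>. pos_quantile G (FL (L \<omega>))) t \<partial>lborel)"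
    by (rule nn_integral_layer_cake) (simp_all add: pos_quantile_nonneg)
  also have "\<dots> \<le> (\<integral>\<^sup>+t. upper_weight Y t \<partial>lborel)"
    using upper_weight_rearranged_le[OF assms(1)] unfolding G_def by (rule nn_integral_mono)
  also have "\<dots> = (\<integral>\<^sup>+\<omega>. ennreal (Y \<omega>) * ennreal (1 / L \<omega>) \<partial>M)"
    by (rule nn_integral_layer_cake[symmetric, OF assms(1,2)])
  finally show ?thesis .
qed

theorem rearrangement_eq_imp_AE_eq:
  assumes [measurable]: "Y \<in> borel_measurable M" and nonneg: "\<forall>\<omega>\<in>space M. 0 \<le> Y \<omega>"
  defines "G \<equiv> cdf (distr M borel Y)"
  assumes finite: "(\<integral>\<^sup>+\<omega>. ennreal (Y \<omega>) * ennreal (1 / L \<omega>) \<partial>M) < \<infinity>"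
    and eq: "(\<integral>\<^sup>+\<omega>. ennreal (pos_quantile G (FL (L \<omega>))) * ennreal (1 / L \<omega>) \<partial>M)
      = (\<integral>\<^sup>+\<omega>. ennreal (Y \<omega>) * ennreal (1 / L \<omega>) \<partial>M)"
  shows "AE \<omega> in M. Y \<omega> = pos_quantile G (FL (L \<omega>))"
proof -
  have G: "is_cdf G" unfolding G_def by (rule is_cdf_cdf) simp
  note [measurable] = borel_measurable_pos_quantile[OF G]
  let ?Z = "\<lambda>\<omega>. pos_quantile G (FL (L \<omega>))"
  have layer_Z: "(\<integral>\<^sup>+\<omega>. ennreal (?Z \<omega>) * ennreal (1 / L \<omega>) \<partial>M) = (\<integral>\<^sup>+t. upper_weight ?Z t \<partial>lborel)"
    by (rule nn_integral_layer_cake) (simp_all add: pos_quantile_nonneg)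
  have layer_Y: "(\<integral>\<^sup>+\<omega>. ennreal (Y \<omega>) * ennreal (1 / L \<omega>) \<partial>M) = (\<integral>\<^sup>+t. upper_weight Y t \<partial>lborel)"
    by (rule nn_integral_layer_cake[OF _ nonneg]) simp
  have "upper_weight ?Z t \<le> upper_weight Y t" for t
    using upper_weight_rearranged_le[of Y] by (simp add: G_def)
  then have "AE t in lborel. upper_weight ?Z t = upper_weight Y t"
    using finite eq unfolding layer_Z layer_Y by (intro nn_integral_eq_imp_AE_eq) auto
  then have "AE t in lborel. AE \<omega> in M. t < Y \<omega> \<longleftrightarrow> t < ?Z \<omega>"
  proof eventually_elim
    case (elim t)
    show ?case
    proof (cases "0 \<le> t")
      case True
      then show ?thesis using upper_weight_rearranged(2)[of Y t] elim unfolding G_def by simp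
    next
      case False
      then show ?thesis
        using nonneg pos_quantile_nonneg[of G] by (intro AE_I2) (auto simp: not_le less_le_trans)
    qed
  qed
  then have "AE \<omega> in M. AE t in lborel. t < Y \<omega> \<longleftrightarrow> t < ?Z \<omega>"
    by (subst (asm) pair_sigma_finite.AE_commute[OF pair_sigma_finite_lborel]) measurable
  then show ?thesis
    by eventually_elim (rule eq_of_AE_lborel_less_iff)
qed


lemma nn_integral_pos_quantile_FL_inv_L_finite:
  assumes G: "is_cdf G" "\<forall>x<0. G x = 0"
    and square_integrable: "set_integrable lborel {0<..<1} (\<lambda>u. (quantile G u)\<^sup>2)"
    and square_integrable_inv_L: "integrable M (\<lambda>\<omega>. (1 / L \<omega>)\<^sup>2)"
  shows "(\<integral>\<^sup>+\<omega>. ennreal (pos_quantile G (FL (L \<omega>))) * ennreal (1 / L \<omega>) \<partial>M) < \<infinity>"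
proof -
  note [measurable] = borel_measurable_pos_quantile[OF G(1)]
  have product_le: "ennreal a * ennreal b \<le> ennreal (a\<^sup>2) + ennreal (b\<^sup>2)" if "0 \<le> a" for a b :: real
  proof (cases "0 \<le> b")
    case True
    have "a * b \<le> a\<^sup>2 + b\<^sup>2"
      using sum_squares_bound[of a b] mult_nonneg_nonneg[OF that True] by linarith
    then show ?thesis
      using that True by (simp add: ennreal_mult[symmetric] ennreal_plus[symmetric] ennreal_leI del: ennreal_plus)
  qed (simp add: ennreal_neg)
  have "(\<integral>\<^sup>+\<omega>. ennreal (pos_quantile G (FL (L \<omega>))) * ennreal (1 / L \<omega>) \<partial>M)
      \<le> (\<integral>\<^sup>+\<omega>. ennreal ((pos_quantile G (FL (L \<omega>)))\<^sup>2) + ennreal ((1 / L \<omega>)\<^sup>2) \<partial>M)"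
    by (intro nn_integral_mono product_le pos_quantile_nonneg)
  also have "\<dots> = (\<integral>\<^sup>+\<omega>. ennreal ((pos_quantile G (FL (L \<omega>)))\<^sup>2) \<partial>M) + (\<integral>\<^sup>+\<omega>. ennreal ((1 / L \<omega>)\<^sup>2) \<partial>M)"
    by (rule nn_integral_add) auto
  also have "\<dots> < \<infinity>"
    using nn_integral_pos_quantile_FL_square[OF G square_integrable] square_integrable_inv_L
    by (simp add: integrable_iff_bounded ennreal_add_less_top)
  finally show ?thesis .
qed

end

section \<open>Cost-efficient payoffs\<close>

lemma price_mono: "(\<integral>\<omega>. X \<omega> \<partial>Q) \<le> (\<integral>\<omega>. Y \<omega> \<partial>Q) \<Longrightarrow> price r T Q X \<le> price r T Q Y"
  unfolding price_def by (intro mult_left_mono) auto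

locale market_model = Q: prob_space Q for Q :: "'a measure" +
  fixes r T :: real and S :: "'a \<Rightarrow> real" and PP :: "'a measure set" and Ps :: "'a measure"
  assumes S_nonneg: "\<forall>\<omega>\<in>space Q. 0 \<le> S \<omega>"
    and sets_Q: "sets Q = sets (vimage_algebra (space Q) S borel)"
    and PP: "\<forall>P\<in>PP. prob_space P \<and> sets P = sets Q \<and> null_sets P = null_sets Q"
    and Ps_in_PP: "Ps \<in> PP"
    and continuous_cdf_lr: "continuous_on UNIV (cdf_of Ps (lr Q Ps))"
    and square_integrable_inv_lr: "integrable Ps (\<lambda>\<omega>. (1 / lr Q Ps \<omega>)\<^sup>2)"
begin

lemma PP_measure:
  assumes "P \<in> PP"
  shows "prob_space P" and "sets P = sets Q" and "null_sets P = null_sets Q" and "space P = space Q"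
proof -
  show "prob_space P" "sets P = sets Q" "null_sets P = null_sets Q"
    using PP assms by auto
  then show "space P = space Q"
    by (intro sets_eq_imp_space_eq) simp
qed

lemma borel_measurable_PP_iff:
  assumes "P \<in> PP"
  shows "X \<in> borel_measurable P \<longleftrightarrow> X \<in> borel_measurable Q"
  unfolding measurable_cong_sets[OF PP_measure(2)[OF assms] refl] ..

lemma payoffD:
  assumes "X \<in> payoffs Q S"
  shows "X \<in> borel_measurable Q" and "\<forall>\<omega>\<in>space Q. 0 \<le> X \<omega>" and "integrable Q X"
  using assms S_nonneg by (auto simp: payoffs_def)

lemma borel_measurable_lr[measurable]: "lr Q Ps \<in> borel_measurable Q"
  unfolding lr_def by measurable

lemma density_lr: "density Q (\<lambda>\<omega>. ennreal (lr Q Ps \<omega>)) = Ps"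
proof -
  note Ps = PP_measure[OF Ps_in_PP]
  have ac: "absolutely_continuous Q Ps"
    using Ps(3) by (simp add: absolutely_continuous_def)
  have "AE \<omega> in Q. RN_deriv Q Ps \<omega> \<noteq> \<infinity>"
    by (rule Q.RN_deriv_finite[OF prob_space_imp_sigma_finite[OF Ps(1)] ac Ps(2)])
  then have "AE \<omega> in Q. RN_deriv Q Ps \<omega> = ennreal (lr Q Ps \<omega>)"
    by eventually_elim (simp add: lr_def less_top[symmetric])
  then have "density Q (RN_deriv Q Ps) = density Q (\<lambda>\<omega>. ennreal (lr Q Ps \<omega>))"
    by (intro density_cong) measurable
  then show ?thesis
    using Q.density_RN_deriv[OF ac Ps(2)] by simp
qed

lemma AE_lr_pos: "AE \<omega> in Q. 0 < lr Q Ps \<omega>"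
proof -
  define N where "N = {\<omega>\<in>space Q. lr Q Ps \<omega> = 0}"
  have [measurable]: "N \<in> sets Q" unfolding N_def by measurable
  have "emeasure Ps N = emeasure (density Q (\<lambda>\<omega>. ennreal (lr Q Ps \<omega>))) N"
    by (simp only: density_lr)
  also have "\<dots> = (\<integral>\<^sup>+\<omega>. ennreal (lr Q Ps \<omega>) * indicator N \<omega> \<partial>Q)"
    by (rule emeasure_density) measurable
  also have "\<dots> = 0"
    by (subst nn_integral_0_iff_AE) (auto simp: N_def indicator_def)
  finally have "N \<in> null_sets Q"
    using PP_measure[OF Ps_in_PP] by (auto simp: null_sets_def)
  from AE_not_in[OF this] AE_space show ?thesis
    by eventually_elim (auto simp: N_def lr_def less_le)
qed

lemma nn_integral_Q_eq_Ps:
  assumes [measurable]: "X \<in> borel_measurable Q"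
  shows "(\<integral>\<^sup>+\<omega>. ennreal (X \<omega>) \<partial>Q) = (\<integral>\<^sup>+\<omega>. ennreal (X \<omega>) * ennreal (1 / lr Q Ps \<omega>) \<partial>Ps)"
proof -
  have "(\<integral>\<^sup>+\<omega>. ennreal (X \<omega>) * ennreal (1 / lr Q Ps \<omega>) \<partial>Ps)
      = (\<integral>\<^sup>+\<omega>. ennreal (X \<omega>) * ennreal (1 / lr Q Ps \<omega>) \<partial>density Q (\<lambda>\<omega>. ennreal (lr Q Ps \<omega>)))"
    by (simp only: density_lr)
  also have "\<dots> = (\<integral>\<^sup>+\<omega>. ennreal (lr Q Ps \<omega>) * (ennreal (X \<omega>) * ennreal (1 / lr Q Ps \<omega>)) \<partial>Q)"
    by (rule nn_integral_density) measurable
  also have "\<dots> = (\<integral>\<^sup>+\<omega>. ennreal (X \<omega>) \<partial>Q)"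
    using AE_lr_pos
    by (intro nn_integral_cong_AE, eventually_elim)
      (simp add: ennreal_mult[symmetric] mult.left_commute del: ennreal_mult)
  finally show ?thesis ..
qed

sublocale P: rearrangement Ps "lr Q Ps"
proof -
  note Ps = PP_measure[OF Ps_in_PP]
  have measurable: "lr Q Ps \<in> borel_measurable Ps"
    by (rule borel_measurable_PP_iff[OF Ps_in_PP, THEN iffD2]) simp
  have "finite_measure Ps"
    using Ps(1) by (rule prob_space.finite_measure)
  moreover have "(\<lambda>\<omega>. 1 / lr Q Ps \<omega>) \<in> borel_measurable Ps"
    using measurable by measurable
  ultimately have "integrable Ps (\<lambda>\<omega>. 1 / lr Q Ps \<omega>)"
    using square_integrable_inv_lr by (rule finite_measure.square_integrable_imp_integrable)
  moreover have "AE \<omega> in Ps. 0 < lr Q Ps \<omega>"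
    using Ps(2,3) AE_lr_pos by (rule AE_transfer_null_sets[OF sym sym])
  ultimately show "rearrangement Ps (lr Q Ps)"
    unfolding rearrangement_def rearrangement_axioms_def continuous_cdf_rv_def continuous_cdf_rv_axioms_def
    using Ps(1) measurable continuous_cdf_lr by (simp add: cdf_of_def)
qed

text \<open>The payoff with cdf \<open>G\<close> under \<open>\<P>\<^sup>*\<close> that is comonotone with the likelihood ratio, which by
  the rearrangement inequality is the cheapest one.\<close>
definition efficient_payoff :: "(real \<Rightarrow> real) \<Rightarrow> 'a \<Rightarrow> real" where
  "efficient_payoff G \<omega> = pos_quantile G (P.FL (lr Q Ps \<omega>))"

lemma borel_measurable_efficient_payoff[measurable]:
  "is_cdf G \<Longrightarrow> efficient_payoff G \<in> borel_measurable Q"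
  unfolding efficient_payoff_def[abs_def] by measurable

lemma efficient_payoff_nonneg: "0 \<le> efficient_payoff G \<omega>"
  by (simp add: efficient_payoff_def pos_quantile_nonneg)

lemma efficient_payoff_in_payoffs:
  assumes "is_cdf G" and "integrable Q (efficient_payoff G)"
  shows "efficient_payoff G \<in> payoffs Q S"
proof -
  obtain g where [measurable]: "g \<in> borel_measurable borel"
    and "\<And>\<omega>. \<omega> \<in> space Q \<Longrightarrow> lr Q Ps \<omega> = g (S \<omega>)"
    using borel_measurable_vimage_algebra_factor[OF sets_Q borel_measurable_lr] by blast
  then have "\<forall>\<omega>\<in>space Q. efficient_payoff G \<omega> = pos_quantile G (P.FL (g (S \<omega>)))"
    by (simp add: efficient_payoff_def)
  moreover have "(\<lambda>x. pos_quantile G (P.FL (g x))) \<in> borel_measurable borel"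
    using assms(1) by measurable
  ultimately show ?thesis
    using assms(2) unfolding payoffs_def by (auto simp: pos_quantile_nonneg)
qed

lemma cdf_of_efficient_payoff:
  "is_cdf G \<Longrightarrow> \<forall>x<0. G x = 0 \<Longrightarrow> cdf_of Ps (efficient_payoff G) = G"
  using P.cdf_pos_quantile_FL by (simp add: cdf_of_def efficient_payoff_def[abs_def])

lemma integral_Q_eq_Ps:
  assumes "integrable Q X" and "\<forall>\<omega>\<in>space Q. 0 \<le> X \<omega>"
  shows "ennreal (\<integral>\<omega>. X \<omega> \<partial>Q) = (\<integral>\<^sup>+\<omega>. ennreal (X \<omega>) * ennreal (1 / lr Q Ps \<omega>) \<partial>Ps)"
  using assms by (simp add: nn_integral_eq_integral[symmetric] AE_I2 nn_integral_Q_eq_Ps)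

lemma integrable_efficient_payoff:
  assumes "is_cdf G"
    and "(\<integral>\<^sup>+\<omega>. ennreal (efficient_payoff G \<omega>) * ennreal (1 / lr Q Ps \<omega>) \<partial>Ps) < \<infinity>"
  shows "integrable Q (efficient_payoff G)"
  using assms nn_integral_Q_eq_Ps[of "efficient_payoff G"]
  by (intro integrableI_nonneg) (auto simp: efficient_payoff_nonneg)

lemma
  assumes "X \<in> payoffs Q S"
  defines "G \<equiv> cdf_of Ps X"
  shows is_cdf_cdf_of_payoff: "is_cdf G"
    and cdf_of_payoff_neg: "\<forall>x<0. G x = 0"
  using payoffD[OF assms(1)] borel_measurable_PP_iff[OF Ps_in_PP] PP_measure[OF Ps_in_PP]
  unfolding G_def cdf_of_def
  by (auto intro: is_cdf_cdf cdf_of_nonneg_rv_neg[unfolded cdf_of_def])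

lemma
  assumes X: "X \<in> payoffs Q S"
  defines "G \<equiv> cdf_of Ps X"
  shows integrable_efficient_payoff_cdf_of: "integrable Q (efficient_payoff G)"
    and integral_efficient_payoff_cdf_of_le: "(\<integral>\<omega>. efficient_payoff G \<omega> \<partial>Q) \<le> (\<integral>\<omega>. X \<omega> \<partial>Q)"
    and efficient_payoff_cdf_of_eq_imp_AE_eq:
      "(\<integral>\<omega>. efficient_payoff G \<omega> \<partial>Q) = (\<integral>\<omega>. X \<omega> \<partial>Q) \<Longrightarrow> AE \<omega> in Ps. X \<omega> = efficient_payoff G \<omega>"
proof -
  note X' = payoffD[OF X]
  have [measurable]: "X \<in> borel_measurable Ps"
    using X'(1) by (rule borel_measurable_PP_iff[OF Ps_in_PP, THEN iffD2])
  have G: "is_cdf G"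
    unfolding G_def by (rule is_cdf_cdf_of_payoff[OF X])
  have X_nonneg: "\<forall>\<omega>\<in>space Ps. 0 \<le> X \<omega>"
    using X'(2) PP_measure(4)[OF Ps_in_PP] by simp
  let ?cost = "\<lambda>Y. \<integral>\<^sup>+\<omega>. ennreal (Y \<omega>) * ennreal (1 / lr Q Ps \<omega>) \<partial>Ps"
  have le: "?cost (efficient_payoff G) \<le> ?cost X"
    using P.rearrangement_inequality[OF _ X_nonneg]
    by (simp add: G_def cdf_of_def efficient_payoff_def[abs_def])
  have cost_X: "ennreal (\<integral>\<omega>. X \<omega> \<partial>Q) = ?cost X"
    by (rule integral_Q_eq_Ps[OF X'(3,2)])
  have finite: "?cost X < \<infinity>"
    unfolding cost_X[symmetric] by simp
  show integrable: "integrable Q (efficient_payoff G)"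
    using le finite by (intro integrable_efficient_payoff[OF G]) simp
  have cost_eq: "ennreal (\<integral>\<omega>. efficient_payoff G \<omega> \<partial>Q) = ?cost (efficient_payoff G)"
    using integrable by (intro integral_Q_eq_Ps) (simp_all add: efficient_payoff_nonneg)
  have "0 \<le> (\<integral>\<omega>. X \<omega> \<partial>Q)"
    using X'(2) by (intro integral_nonneg_AE AE_I2) auto
  moreover have "ennreal (\<integral>\<omega>. efficient_payoff G \<omega> \<partial>Q) \<le> ennreal (\<integral>\<omega>. X \<omega> \<partial>Q)"
    unfolding cost_eq cost_X by (rule le)
  ultimately show "(\<integral>\<omega>. efficient_payoff G \<omega> \<partial>Q) \<le> (\<integral>\<omega>. X \<omega> \<partial>Q)"
    by (rule ennreal_le_iff[THEN iffD1])
  assume "(\<integral>\<omega>. efficient_payoff G \<omega> \<partial>Q) = (\<integral>\<omega>. X \<omega> \<partial>Q)"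
  then have "?cost (efficient_payoff G) = ?cost X"
    using cost_eq cost_X by simp
  then show "AE \<omega> in Ps. X \<omega> = efficient_payoff G \<omega>"
    using P.rearrangement_eq_imp_AE_eq[OF _ X_nonneg] finite
    by (simp add: G_def cdf_of_def efficient_payoff_def[abs_def])
qed

lemma cost_efficient_efficient_payoff:
  assumes G: "is_cdf G" "\<forall>x<0. G x = 0" and "integrable Q (efficient_payoff G)"
  shows "cost_efficient r T Q S Ps (efficient_payoff G)"
  unfolding cost_efficient_def
proof (intro conjI ballI impI)
  show "efficient_payoff G \<in> payoffs Q S"
    by (rule efficient_payoff_in_payoffs[OF G(1) assms(3)])
  fix Y assume "Y \<in> payoffs Q S" and "cdf_of Ps Y = cdf_of Ps (efficient_payoff G)"
  then have "(\<integral>\<omega>. efficient_payoff G \<omega> \<partial>Q) \<le> (\<integral>\<omega>. Y \<omega> \<partial>Q)"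
    using integral_efficient_payoff_cdf_of_le[of Y] cdf_of_efficient_payoff[OF G] by simp
  then show "price r T Q (efficient_payoff G) \<le> price r T Q Y"
    by (rule price_mono)
qed

end

section \<open>Robust cost-efficiency\<close>

locale robust_problem = market_model +
  fixes FF :: "(real \<Rightarrow> real) set" and F0 :: "real \<Rightarrow> real"
  assumes FF_measurable: "FF \<subseteq> borel_measurable borel"
    and composition_consistent: "composition_consistent FF"
    and cost_consistent: "cost_consistent r T Q S PP FF"
    and least_favorable: "least_favorable Q PP FF Ps"
    and is_cdf_F0: "is_cdf F0" and F0_neg: "\<forall>x<0. F0 x = 0"
    and square_integrable_quantile_F0: "set_integrable lborel {0<..<1} (\<lambda>u. (quantile F0 u)\<^sup>2)"
    and quantile_F0_comp_in_FF: "quantile F0 \<circ> cdf_of Ps (lr Q Ps) \<in> FF"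
begin

lemma integrable_efficient_payoff_F0: "integrable Q (efficient_payoff F0)"
  using P.nn_integral_pos_quantile_FL_inv_L_finite[OF is_cdf_F0 F0_neg
      square_integrable_quantile_F0 square_integrable_inv_lr]
  by (intro integrable_efficient_payoff[OF is_cdf_F0]) (simp add: efficient_payoff_def)

lemma efficient_payoff_F0_eq_quantile:
  assumes "P \<in> PP"
  shows "AE \<omega> in P. efficient_payoff F0 \<omega> = quantile F0 (cdf_of Ps (lr Q Ps) (lr Q Ps \<omega>))"
proof -
  have "AE \<omega> in Ps. efficient_payoff F0 \<omega> = quantile F0 (cdf_of Ps (lr Q Ps) (lr Q Ps \<omega>))"
    using P.AE_FL_in_unit
    by eventually_elim
      (simp add: efficient_payoff_def cdf_of_def pos_quantile_eq_quantile[OF is_cdf_F0 F0_neg])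
  then show ?thesis
    by (rule AE_transfer_null_sets[rotated 2])
      (simp_all add: PP_measure(2,3)[OF Ps_in_PP] PP_measure(2,3)[OF assms])
qed

text \<open>This is how the least favorable property, stated for the likelihood ratio, passes to the
  optimal payoff.\<close>
lemma cdf_of_efficient_payoff_F0:
  assumes "P \<in> PP"
  shows "cdf_of P (efficient_payoff F0)
    = cdf (distr (distr P borel (lr Q Ps)) borel (quantile F0 \<circ> cdf_of Ps (lr Q Ps)))"
proof -
  define h where "h = quantile F0 \<circ> cdf_of Ps (lr Q Ps)"
  have [measurable]: "h \<in> borel_measurable borel"
    using quantile_F0_comp_in_FF FF_measurable by (auto simp: h_def)
  have [measurable]: "lr Q Ps \<in> borel_measurable P"
    by (rule borel_measurable_PP_iff[OF assms, THEN iffD2]) simp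
  have "efficient_payoff F0 \<in> borel_measurable P"
    by (rule borel_measurable_PP_iff[OF assms, THEN iffD2]) (simp add: is_cdf_F0)
  moreover have "AE \<omega> in P. efficient_payoff F0 \<omega> = h (lr Q Ps \<omega>)"
    using efficient_payoff_F0_eq_quantile[OF assms] by (simp add: h_def)
  ultimately have "distr P borel (efficient_payoff F0) = distr P borel (\<lambda>\<omega>. h (lr Q Ps \<omega>))"
    by (intro distr_cong_AE) simp_all
  also have "\<dots> = distr (distr P borel (lr Q Ps)) borel h"
    by (simp add: distr_distr comp_def)
  finally show ?thesis
    by (simp add: cdf_of_def h_def)
qed

lemma efficient_payoff_F0_robust_feasible:
  "efficient_payoff F0 \<in> robust_feasible Q S PP FF F0"
  unfolding robust_feasible_def
proof (intro CollectI conjI ballI)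
  show "efficient_payoff F0 \<in> payoffs Q S"
    by (rule efficient_payoff_in_payoffs[OF is_cdf_F0 integrable_efficient_payoff_F0])
  have real_distribution: "real_distribution (distr P borel (lr Q Ps))" if "P \<in> PP" for P
    by (rule prob_space.real_distribution_distr[OF PP_measure(1)[OF that]])
      (simp add: borel_measurable_PP_iff[OF that])
  fix P assume "P \<in> PP"
  have "stoch_le FF (cdf (distr Ps borel (lr Q Ps))) (cdf (distr P borel (lr Q Ps)))"
    using least_favorable \<open>P \<in> PP\<close> by (simp add: least_favorable_def cdf_of_def)
  then have "stoch_le FF (cdf_of Ps (efficient_payoff F0)) (cdf_of P (efficient_payoff F0))"
    unfolding cdf_of_efficient_payoff_F0[OF Ps_in_PP] cdf_of_efficient_payoff_F0[OF \<open>P \<in> PP\<close>]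
    by (rule stoch_le_distr[OF real_distribution[OF Ps_in_PP] real_distribution[OF \<open>P \<in> PP\<close>]
          composition_consistent FF_measurable quantile_F0_comp_in_FF])
  then show "stoch_le FF F0 (cdf_of P (efficient_payoff F0))"
    unfolding cdf_of_efficient_payoff[OF is_cdf_F0 F0_neg] .
qed

text \<open>Cost consistency compares the optimal payoff with the cost-efficient payoff sharing the
  \<open>\<P>\<^sup>*\<close>-distribution of a feasible \<open>X\<close>, which in turn is cheaper than \<open>X\<close>.\<close>
lemma integral_efficient_payoff_F0_le:
  assumes X: "X \<in> robust_feasible Q S PP FF F0"
  defines "G \<equiv> cdf_of Ps X"
  shows "(\<integral>\<omega>. efficient_payoff F0 \<omega> \<partial>Q) \<le> (\<integral>\<omega>. efficient_payoff G \<omega> \<partial>Q)"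
    and "G \<noteq> F0 \<Longrightarrow> (\<integral>\<omega>. efficient_payoff F0 \<omega> \<partial>Q) < (\<integral>\<omega>. efficient_payoff G \<omega> \<partial>Q)"
proof -
  have X_payoff: "X \<in> payoffs Q S" and "stoch_le FF F0 G"
    using X Ps_in_PP unfolding robust_feasible_def G_def by auto
  note G = is_cdf_cdf_of_payoff[OF X_payoff, folded G_def] cdf_of_payoff_neg[OF X_payoff, folded G_def]
  have integrable: "integrable Q (efficient_payoff G)"
    using integrable_efficient_payoff_cdf_of[OF X_payoff] by (simp add: G_def)
  have "stoch_le FF (cdf_of Ps (efficient_payoff F0)) (cdf_of Ps (efficient_payoff G))"
    using \<open>stoch_le FF F0 G\<close> cdf_of_efficient_payoff[OF is_cdf_F0 F0_neg] cdf_of_efficient_payoff[OF G]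
    by simp
  moreover have "cost_efficient r T Q S Ps (efficient_payoff F0)" "cost_efficient r T Q S Ps (efficient_payoff G)"
    using cost_efficient_efficient_payoff[OF is_cdf_F0 F0_neg integrable_efficient_payoff_F0]
      cost_efficient_efficient_payoff[OF G integrable] .
  ultimately have "(\<integral>\<omega>. efficient_payoff F0 \<omega> \<partial>Q) \<le> (\<integral>\<omega>. efficient_payoff G \<omega> \<partial>Q) \<and>
      (cdf_of Ps (efficient_payoff F0) \<noteq> cdf_of Ps (efficient_payoff G) \<longrightarrow>
        (\<integral>\<omega>. efficient_payoff F0 \<omega> \<partial>Q) < (\<integral>\<omega>. efficient_payoff G \<omega> \<partial>Q))"
    by (intro cost_consistent[unfolded cost_consistent_def, rule_format] Ps_in_PP conjI
        efficient_payoff_in_payoffs[OF is_cdf_F0 integrable_efficient_payoff_F0]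
        efficient_payoff_in_payoffs[OF G(1) integrable])
  then show "(\<integral>\<omega>. efficient_payoff F0 \<omega> \<partial>Q) \<le> (\<integral>\<omega>. efficient_payoff G \<omega> \<partial>Q)"
    and "G \<noteq> F0 \<Longrightarrow> (\<integral>\<omega>. efficient_payoff F0 \<omega> \<partial>Q) < (\<integral>\<omega>. efficient_payoff G \<omega> \<partial>Q)"
    unfolding cdf_of_efficient_payoff[OF is_cdf_F0 F0_neg] cdf_of_efficient_payoff[OF G] by auto
qed

lemma robust_solution_efficient_payoff_F0:
  "robust_solution r T Q S PP FF F0 (efficient_payoff F0)"
  unfolding robust_solution_def
proof (intro conjI ballI efficient_payoff_F0_robust_feasible)
  fix X assume X: "X \<in> robust_feasible Q S PP FF F0"
  then have "X \<in> payoffs Q S"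
    by (simp add: robust_feasible_def)
  then have "(\<integral>\<omega>. efficient_payoff (cdf_of Ps X) \<omega> \<partial>Q) \<le> (\<integral>\<omega>. X \<omega> \<partial>Q)"
    by (rule integral_efficient_payoff_cdf_of_le)
  with integral_efficient_payoff_F0_le(1)[OF X]
  have "(\<integral>\<omega>. efficient_payoff F0 \<omega> \<partial>Q) \<le> (\<integral>\<omega>. X \<omega> \<partial>Q)"
    by (rule order_trans)
  then show "price r T Q (efficient_payoff F0) \<le> price r T Q X"
    by (rule price_mono)
qed

lemma robust_solution_AE_eq:
  assumes X: "robust_solution r T Q S PP FF F0 X"
  shows "AE \<omega> in Ps. X \<omega> = efficient_payoff F0 \<omega>"
proof -
  define G where "G = cdf_of Ps X"
  have feasible: "X \<in> robust_feasible Q S PP FF F0"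
    and X_payoff: "X \<in> payoffs Q S"
    and "price r T Q X \<le> price r T Q (efficient_payoff F0)"
    using X efficient_payoff_F0_robust_feasible unfolding robust_solution_def robust_feasible_def by auto
  then have X_cheapest: "(\<integral>\<omega>. X \<omega> \<partial>Q) \<le> (\<integral>\<omega>. efficient_payoff F0 \<omega> \<partial>Q)"
    by (simp add: price_def)
  note le = integral_efficient_payoff_F0_le[OF feasible, folded G_def]
    integral_efficient_payoff_cdf_of_le[OF X_payoff, folded G_def]
  have "G = F0"
  proof (rule ccontr)
    assume "G \<noteq> F0"
    with le(2) X_cheapest le(3) show False by linarith
  qed
  have "(\<integral>\<omega>. efficient_payoff G \<omega> \<partial>Q) = (\<integral>\<omega>. X \<omega> \<partial>Q)"
    using le X_cheapest by linarith
  then have "AE \<omega> in Ps. X \<omega> = efficient_payoff G \<omega>"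
    unfolding G_def by (rule efficient_payoff_cdf_of_eq_imp_AE_eq[OF X_payoff])
  then show ?thesis
    unfolding \<open>G = F0\<close> .
qed

end

theorem mainTheorem3:
  fixes T r :: real and S :: "'a \<Rightarrow> real" and Q :: "'a measure"
    and PP :: "'a measure set" and FF :: "(real \<Rightarrow> real) set"
    and F0 :: "real \<Rightarrow> real" and Ps :: "'a measure"
  assumes "T > 0"
    and S_nonneg: "\<forall>\<omega>\<in>space Q. 0 \<le> S \<omega>"
    and sigma_S: "sets Q = sets (vimage_algebra (space Q) S borel)"
    and Q: "prob_space Q"
    and PP: "\<forall>P\<in>PP. prob_space P \<and> sets P = sets Q \<and> null_sets P = null_sets Q"
    and FF_meas: "FF \<subseteq> borel_measurable borel"
    and cdf_F0: "is_cdf F0"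
    and C1: "set_integrable lborel {0<..<1} (\<lambda>u. (quantile F0 u)\<^sup>2)"
        "\<forall>x<0. F0 x = 0"
    and C2: "composition_consistent FF" "cost_consistent r T Q S PP FF"
    and C3: "least_favorable Q PP FF Ps"
    and C4: "continuous_on UNIV (cdf_of Ps (lr Q Ps))"
        "integrable Ps (\<lambda>\<omega>. (1 / lr Q Ps \<omega>)\<^sup>2)"
    and inF: "quantile F0 \<circ> cdf_of Ps (lr Q Ps) \<in> FF"
  shows "(\<exists>X. robust_solution r T Q S PP FF F0 X \<and>
            (AE \<omega> in Ps. X \<omega> = quantile F0 (cdf_of Ps (lr Q Ps) (lr Q Ps \<omega>)))) \<and>
         (\<forall>X. robust_solution r T Q S PP FF F0 X \<longrightarrow>
            (AE \<omega> in Ps. X \<omega> = quantile F0 (cdf_of Ps (lr Q Ps) (lr Q Ps \<omega>))))"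
proof -
  interpret robust_problem Q r T S PP Ps FF F0
    by (intro robust_problem.intro market_model.intro market_model_axioms.intro
        robust_problem_axioms.intro Q S_nonneg sigma_S PP FF_meas C2 C3 C4 cdf_F0 C1 inF
        C3[unfolded least_favorable_def, THEN conjunct1])
  have optimal: "AE \<omega> in Ps. efficient_payoff F0 \<omega> = quantile F0 (cdf_of Ps (lr Q Ps) (lr Q Ps \<omega>))"
    by (rule efficient_payoff_F0_eq_quantile[OF Ps_in_PP])
  have unique: "AE \<omega> in Ps. X \<omega> = quantile F0 (cdf_of Ps (lr Q Ps) (lr Q Ps \<omega>))"
    if "robust_solution r T Q S PP FF F0 X" for X
    using robust_solution_AE_eq[OF that] optimal by eventually_elim simp
  show ?thesis
    using robust_solution_efficient_payoff_F0 optimal unique by blast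
qed

end
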